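(* Let $(\Gamma,w)$ and $(\Gamma',w')$ be loopless vertex-weighted metric graphs with genus $g$ and $g'$ respectively, and let $\phi:(\Gamma,w)\to(\Gamma',w')$ be a pseudo-harmonic morphism with respect to loopless models $(G,\ell)$ and $(G',\ell')$. Writing $v'=\phi(v)$: (i) $K_{(\Gamma,w)}=\phi^*K_{(\Gamma',w')}+R_\phi$, where $$R_\phi=\sum_{v\in V(G)}\Big(2\big(M_\phi(v)-1+w(v)-M_\phi(v)w'(v')\big)-\sum_{e\in E_v(G)}(U_\phi(e)-1)\Big)(v);$$ (ii) $$2g-2=\deg(\phi)(2g'-2)+\sum_{v\in V(G)}2\big(M_\phi(v)-1+w(v)-M_\phi(v)w'(v')\big)-\sum_{v\in V(G)}\sum_{e\in E_v(G)}(U_\phi(e)-1).$$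
   Context: A vertex-weighted metric graph $(\Gamma,w)$ with loopless model $(G,\ell)$: $G$ a finite connected loopless multigraph, $\ell:E(G)\to\mathbb{R}_{>0}$, $w:V(G)\to\mathbb{Z}_{\ge0}$. $val(v)$ is the number of edges incident to $v$, $E_v(G)$ the set of them. Genus: $g(\Gamma,w)=|E(G)|-|V(G)|+1+\sum_{v\in V(G)}w(v)$. Canonical divisor: $K_{(\Gamma,w)}=\sum_{v\in V(G)}(val(v)-2+2w(v))(v)$. A morphism of loopless models $\phi:(G,\ell)\to(G',\ell')$ is a map $V(G)\cup E(G)\to V(G')\cup E(G')$ with $\phi(V(G))\subseteq V(G')$, such that for each edge $e=xy$ either $\phi(e)\in V(G')$ and $\phi(x)=\phi(e)=\phi(y)$ (then $U_\phi(e)=0$), or $\phi(e)$ is an edge between $\phi(x),\phi(y)$ and $U_\phi(e)=\ell'(\phi(e))/\ell(e)$ is a positive integer. $\phi$ is pseudo-harmonic if for every $v\in V(G)$ the number $M_\phi(v)=\sum_{e\in E(G),v\in e,\phi(e)=e'}U_\phi(e)$ is the same for all $e'\in E(G')$ incident to $\phi(v)$. $\deg(\phi)=\sum_{\phi(e)=e'}U_\phi(e)$ for any $e'\in E(G')$ ($0$ if $G'$ has no edges). Pullback: $(\phi^*D')(v)=M_\phi(v)D'(\phi(v))$ for $v\in V(G)$. *)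

theory Defs
  imports Complex_Main
begin

text \<open>A vertex-weighted metric graph given through a loopless model (G, ell, w).
  Edges are abstract elements (so multigraphs are allowed); each edge has a set of
  two distinct endpoints.\<close>

record ('v, 'e) wgraph =
  verts :: "'v set"
  edges :: "'e set"
  ends  :: "'e \<Rightarrow> 'v set"
  len   :: "'e \<Rightarrow> real"
  wt    :: "'v \<Rightarrow> nat"

definition adj :: "('v, 'e) wgraph \<Rightarrow> ('v \<times> 'v) set" where
  "adj G = {(x, y). \<exists>e\<in>edges G. ends G e = {x, y}}"

definition loopless_model :: "('v, 'e) wgraph \<Rightarrow> bool" where
  "loopless_model G \<longleftrightarrow>
     finite (verts G) \<and> finite (edges G) \<and> verts G \<noteq> {} \<and>
     (\<forall>e\<in>edges G. card (ends G e) = 2 \<and> ends G e \<subseteq> verts G \<and> len G e > 0) \<and>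
     (\<forall>u\<in>verts G. \<forall>v\<in>verts G. (u, v) \<in> (adj G)\<^sup>*)"

definition inc_edges :: "('v, 'e) wgraph \<Rightarrow> 'v \<Rightarrow> 'e set" where
  "inc_edges G v = {e \<in> edges G. v \<in> ends G e}"

definition val :: "('v, 'e) wgraph \<Rightarrow> 'v \<Rightarrow> nat" where
  "val G v = card (inc_edges G v)"

definition genus :: "('v, 'e) wgraph \<Rightarrow> int" where
  "genus G = int (card (edges G)) - int (card (verts G)) + 1 + (\<Sum>v\<in>verts G. int (wt G v))"

definition canonical :: "('v, 'e) wgraph \<Rightarrow> 'v \<Rightarrow> int" where
  "canonical G v = int (val G v) - 2 + 2 * int (wt G v)"

text \<open>A morphism of loopless models is given by a vertex map fV and an edge map fE,
  where fE e = Inl v' (edge contracted to vertex v') or Inr e' (edge mapped to edge e').\<close>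

definition morphism ::
  "('v, 'e) wgraph \<Rightarrow> ('w, 'f) wgraph \<Rightarrow> ('v \<Rightarrow> 'w) \<Rightarrow> ('e \<Rightarrow> 'w + 'f) \<Rightarrow> bool" where
  "morphism G G' fV fE \<longleftrightarrow>
     (\<forall>v\<in>verts G. fV v \<in> verts G') \<and>
     (\<forall>e\<in>edges G.
        (\<exists>v'\<in>verts G'. fE e = Inl v' \<and> (\<forall>x\<in>ends G e. fV x = v')) \<or>
        (\<exists>e'\<in>edges G'. fE e = Inr e' \<and> ends G' e' = fV ` ends G e \<and>
            (\<exists>n::nat. n > 0 \<and> len G' e' / len G e = real n)))"

definition U :: "('v, 'e) wgraph \<Rightarrow> ('w, 'f) wgraph \<Rightarrow> ('e \<Rightarrow> 'w + 'f) \<Rightarrow> 'e \<Rightarrow> int" where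
  "U G G' fE e = (case fE e of Inl _ \<Rightarrow> 0 | Inr e' \<Rightarrow> \<lfloor>len G' e' / len G e\<rfloor>)"

definition Mloc ::
  "('v, 'e) wgraph \<Rightarrow> ('w, 'f) wgraph \<Rightarrow> ('e \<Rightarrow> 'w + 'f) \<Rightarrow> 'v \<Rightarrow> 'f \<Rightarrow> int" where
  "Mloc G G' fE v e' = (\<Sum>e\<in>{e \<in> edges G. v \<in> ends G e \<and> fE e = Inr e'}. U G G' fE e)"

definition pseudo_harmonic ::
  "('v, 'e) wgraph \<Rightarrow> ('w, 'f) wgraph \<Rightarrow> ('v \<Rightarrow> 'w) \<Rightarrow> ('e \<Rightarrow> 'w + 'f) \<Rightarrow> bool" where
  "pseudo_harmonic G G' fV fE \<longleftrightarrow> morphism G G' fV fE \<and>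
     (\<forall>v\<in>verts G. \<forall>e1\<in>inc_edges G' (fV v). \<forall>e2\<in>inc_edges G' (fV v).
        Mloc G G' fE v e1 = Mloc G G' fE v e2)"

text \<open>M_phi(v): the common value; by convention 0 if phi(v) has no incident edge.\<close>
definition M ::
  "('v, 'e) wgraph \<Rightarrow> ('w, 'f) wgraph \<Rightarrow> ('v \<Rightarrow> 'w) \<Rightarrow> ('e \<Rightarrow> 'w + 'f) \<Rightarrow> 'v \<Rightarrow> int" where
  "M G G' fV fE v =
     (if inc_edges G' (fV v) = {} then 0
      else Mloc G G' fE v (SOME e'. e' \<in> inc_edges G' (fV v)))"

definition deg :: "('v, 'e) wgraph \<Rightarrow> ('w, 'f) wgraph \<Rightarrow> ('e \<Rightarrow> 'w + 'f) \<Rightarrow> int" where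
  "deg G G' fE =
     (if edges G' = {} then 0
      else (\<Sum>e\<in>{e \<in> edges G. fE e = Inr (SOME e'. e' \<in> edges G')}. U G G' fE e))"

definition pullback ::
  "('v, 'e) wgraph \<Rightarrow> ('w, 'f) wgraph \<Rightarrow> ('v \<Rightarrow> 'w) \<Rightarrow> ('e \<Rightarrow> 'w + 'f) \<Rightarrow> ('w \<Rightarrow> int) \<Rightarrow> 'v \<Rightarrow> int" where
  "pullback G G' fV fE D' v = M G G' fV fE v * D' (fV v)"

definition ramification ::
  "('v, 'e) wgraph \<Rightarrow> ('w, 'f) wgraph \<Rightarrow> ('v \<Rightarrow> 'w) \<Rightarrow> ('e \<Rightarrow> 'w + 'f) \<Rightarrow> 'v \<Rightarrow> int" where
  "ramification G G' fV fE v =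
     2 * (M G G' fV fE v - 1 + int (wt G v) - M G G' fV fE v * int (wt G' (fV v)))
     - (\<Sum>e\<in>inc_edges G v. U G G' fE e - 1)"

end

theory Submission
  imports Defs
begin

text \<open>Pseudo-harmonicity at a vertex v says that the edges at v over each edge at v' = phi(v)
  have total multiplicity M(v), so the sum of U over the edges at v is M(v) val(v'); rearranged,
  this is (i). Summing (i) over V(G) gives (ii): by the handshake lemma the canonical divisor has
  degree 2g - 2, and the pullback of a divisor D' has degree deg(phi) deg(D'). For the latter,
  every edge over an edge e' at v' has exactly one endpoint over v', because phi maps its two
  ends onto the two ends of e'; hence the sum of M over the fibre of v' equals the total
  multiplicity over e'. It is therefore the same at both ends of every edge, and by connectivity
  of G' it is deg(phi) at every vertex.\<close>

lemma sum_val_eq_twice_card_edges: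
  assumes "finite (verts G)" and "finite (edges G)"
    and "\<And>e. e \<in> edges G \<Longrightarrow> card (ends G e) = 2 \<and> ends G e \<subseteq> verts G"
  shows "(\<Sum>v\<in>verts G. int (val G v)) = 2 * int (card (edges G))"
proof -
  have "(\<Sum>v\<in>verts G. int (val G v)) =
        (\<Sum>v\<in>verts G. \<Sum>e\<in>edges G. if v \<in> ends G e then 1 else 0)"
    unfolding val_def inc_edges_def using assms(2) by (simp add: sum.If_cases Int_def)
  also have "\<dots> = (\<Sum>e\<in>edges G. \<Sum>v\<in>verts G. if v \<in> ends G e then 1 else 0)"
    by (rule sum.swap)
  also have "\<dots> = (\<Sum>e\<in>edges G. int (card (ends G e)))"
    using assms(1,3) by (intro sum.cong refl) (simp add: sum.If_cases Int_absorb1)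
  also have "\<dots> = (\<Sum>e\<in>edges G. 2)"
    using assms(3) by simp
  finally show ?thesis by simp
qed

lemma sum_canonical_eq_genus:
  assumes "loopless_model G"
  shows "(\<Sum>v\<in>verts G. canonical G v) = 2 * genus G - 2"
proof -
  have "(\<Sum>v\<in>verts G. canonical G v) =
     (\<Sum>v\<in>verts G. int (val G v)) - 2 * int (card (verts G)) + 2 * (\<Sum>v\<in>verts G. int (wt G v))"
    unfolding canonical_def by (simp add: sum.distrib sum_subtractf sum_distrib_left)
  moreover have "(\<Sum>v\<in>verts G. int (val G v)) = 2 * int (card (edges G))"
    using assms unfolding loopless_model_def by (intro sum_val_eq_twice_card_edges) auto
  ultimately show ?thesis
    unfolding genus_def by simp
qed

lemma morphism_edge_image:
  assumes "morphism G G' fV fE" and "e \<in> edges G" and "fE e = Inr e'"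
  shows "e' \<in> edges G'" and "ends G' e' = fV ` ends G e"
  using assms unfolding morphism_def by fastforce+

lemma M_eq_Mloc:
  assumes "pseudo_harmonic G G' fV fE" and "v \<in> verts G" and "e' \<in> inc_edges G' (fV v)"
  shows "M G G' fV fE v = Mloc G G' fE v e'"
proof -
  have "(SOME e'. e' \<in> inc_edges G' (fV v)) \<in> inc_edges G' (fV v)"
    using assms(3) by (rule someI)
  with assms have "Mloc G G' fE v e' = Mloc G G' fE v (SOME e'. e' \<in> inc_edges G' (fV v))"
    unfolding pseudo_harmonic_def by blast
  with assms(3) show ?thesis
    unfolding M_def by auto
qed

lemma sum_U_inc_edges:
  assumes "finite (edges G)" and "finite (edges G')"
    and ph: "pseudo_harmonic G G' fV fE" and v: "v \<in> verts G"
  shows "(\<Sum>e\<in>inc_edges G v. U G G' fE e) = M G G' fV fE v * int (val G' (fV v))"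
proof -
  have mor: "morphism G G' fV fE"
    using ph unfolding pseudo_harmonic_def by simp
  define S where "S = {e \<in> inc_edges G v. \<exists>e'. fE e = Inr e'}"
  define T where "T = inc_edges G' (fV v)"
  define target where "target = (\<lambda>e. case fE e of Inl _ \<Rightarrow> undefined | Inr e' \<Rightarrow> e')"
  have "(\<Sum>e\<in>inc_edges G v. U G G' fE e) = (\<Sum>e\<in>S. U G G' fE e)"
    using assms(1) unfolding S_def U_def inc_edges_def
    by (intro sum.mono_neutral_right) (auto split: sum.split)
  also have "\<dots> = (\<Sum>e'\<in>T. \<Sum>e\<in>{e \<in> S. target e = e'}. U G G' fE e)"
  proof (rule sum.group[symmetric])
    show "finite S" and "finite T"
      using assms(1,2) unfolding S_def T_def inc_edges_def by simp_all
    show "target ` S \<subseteq> T"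
      using morphism_edge_image[OF mor]
      unfolding S_def T_def target_def inc_edges_def by fastforce
  qed
  also have "\<dots> = (\<Sum>e'\<in>T. Mloc G G' fE v e')"
    unfolding Mloc_def S_def target_def inc_edges_def
    by (intro sum.cong refl arg_cong[where f = "\<lambda>A. sum _ A"]) auto
  also have "\<dots> = (\<Sum>e'\<in>T. M G G' fV fE v)"
    using M_eq_Mloc[OF ph v] unfolding T_def by simp
  finally show ?thesis
    unfolding val_def T_def by simp
qed

lemma canonical_eq_pullback_plus_ramification:
  assumes "loopless_model G" and "loopless_model G'"
    and "pseudo_harmonic G G' fV fE" and "v \<in> verts G"
  shows "canonical G v = pullback G G' fV fE (canonical G') v + ramification G G' fV fE v"
proof -
  have "finite (edges G)" and "finite (edges G')"
    using assms(1,2) unfolding loopless_model_def by simp_all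
  then have "(\<Sum>e\<in>inc_edges G v. U G G' fE e - 1) =
             M G G' fV fE v * int (val G' (fV v)) - int (val G v)"
    using sum_U_inc_edges[OF _ _ assms(3,4)] by (simp add: sum_subtractf val_def)
  then show ?thesis
    unfolding canonical_def pullback_def ramification_def by (simp add: algebra_simps)
qed

lemma sum_M_fibre_eq_sum_U:
  assumes G: "loopless_model G" and G': "loopless_model G'"
    and ph: "pseudo_harmonic G G' fV fE" and e': "e' \<in> edges G'" and a: "a \<in> ends G' e'"
  shows "(\<Sum>v\<in>{v \<in> verts G. fV v = a}. M G G' fV fE v) =
         (\<Sum>e\<in>{e \<in> edges G. fE e = Inr e'}. U G G' fE e)"
proof -
  have mor: "morphism G G' fV fE"
    using ph unfolding pseudo_harmonic_def by simp
  define A where "A = {v \<in> verts G. fV v = a}"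
  define B where "B = {e \<in> edges G. fE e = Inr e'}"
  have "finite A" and "finite B"
    using G unfolding A_def B_def loopless_model_def by simp_all
  have "(\<Sum>v\<in>A. M G G' fV fE v) = (\<Sum>v\<in>A. \<Sum>e\<in>{e \<in> B. v \<in> ends G e}. U G G' fE e)"
  proof (rule sum.cong[OF refl])
    fix v assume "v \<in> A"
    then have "v \<in> verts G" and "e' \<in> inc_edges G' (fV v)"
      using a e' unfolding A_def inc_edges_def by auto
    then have "M G G' fV fE v = Mloc G G' fE v e'"
      by (rule M_eq_Mloc[OF ph])
    also have "\<dots> = (\<Sum>e\<in>{e \<in> B. v \<in> ends G e}. U G G' fE e)"
      unfolding Mloc_def B_def by (rule sum.cong) auto
    finally show "M G G' fV fE v = (\<Sum>e\<in>{e \<in> B. v \<in> ends G e}. U G G' fE e)" .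
  qed
  also have "\<dots> = (\<Sum>e\<in>B. \<Sum>v\<in>{v \<in> A. v \<in> ends G e}. U G G' fE e)"
    using \<open>finite A\<close> \<open>finite B\<close> by (rule sum.swap_restrict)
  also have "\<dots> = (\<Sum>e\<in>B. U G G' fE e)"
  proof (rule sum.cong[OF refl])
    fix e assume "e \<in> B"
    then have e: "e \<in> edges G" "fE e = Inr e'"
      unfolding B_def by auto
    then obtain x y where xy: "ends G e = {x, y}" "x \<noteq> y" "x \<in> verts G" "y \<in> verts G"
      using G unfolding loopless_model_def by (force simp: card_2_iff)
    have "ends G' e' = {fV x, fV y}"
      using morphism_edge_image(2)[OF mor e] xy(1) by simp
    moreover have "card (ends G' e') = 2"
      using G' e' unfolding loopless_model_def by simp
    ultimately have "fV x \<noteq> fV y" and "fV x = a \<or> fV y = a"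
      using a by auto
    then have "{v \<in> A. v \<in> ends G e} = {x} \<or> {v \<in> A. v \<in> ends G e} = {y}"
      using xy unfolding A_def by auto
    then show "(\<Sum>v\<in>{v \<in> A. v \<in> ends G e}. U G G' fE e) = U G G' fE e"
      by auto
  qed
  finally show ?thesis
    unfolding A_def B_def .
qed

lemma sum_M_fibre_eq_deg:
  assumes G: "loopless_model G" and G': "loopless_model G'"
    and ph: "pseudo_harmonic G G' fV fE" and "edges G' \<noteq> {}" and b: "b \<in> verts G'"
  shows "(\<Sum>v\<in>{v \<in> verts G. fV v = b}. M G G' fV fE v) = deg G G' fE"
proof -
  define fibre_sum where "fibre_sum = (\<lambda>b. \<Sum>v\<in>{v \<in> verts G. fV v = b}. M G G' fV fE v)"
  define e0 where "e0 = (SOME e'. e' \<in> edges G')"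
  have e0: "e0 \<in> edges G'"
    using \<open>edges G' \<noteq> {}\<close> unfolding e0_def by (simp add: some_in_eq)
  then obtain a where a: "a \<in> ends G' e0" "a \<in> verts G'"
    using G' unfolding loopless_model_def by (force simp: card_2_iff)
  have "fibre_sum a = deg G G' fE"
    using sum_M_fibre_eq_sum_U[OF G G' ph e0 a(1)] \<open>edges G' \<noteq> {}\<close>
    unfolding fibre_sum_def deg_def e0_def by simp
  have "(a, b) \<in> (adj G')\<^sup>*"
    using G' a b unfolding loopless_model_def by auto
  then have "fibre_sum b = fibre_sum a"
  proof (induction rule: rtrancl_induct)
    case (step y z)
    then obtain e' where "e' \<in> edges G'" "ends G' e' = {y, z}"
      unfolding adj_def by auto
    then show ?case
      using step.IH sum_M_fibre_eq_sum_U[OF G G' ph, of e']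
      unfolding fibre_sum_def by simp
  qed simp
  with \<open>fibre_sum a = deg G G' fE\<close> show ?thesis
    unfolding fibre_sum_def by simp
qed

lemma sum_pullback_eq_deg_mult:
  assumes G: "loopless_model G" and G': "loopless_model G'"
    and ph: "pseudo_harmonic G G' fV fE"
  shows "(\<Sum>v\<in>verts G. pullback G G' fV fE D' v) = deg G G' fE * (\<Sum>b\<in>verts G'. D' b)"
proof (cases "edges G' = {}")
  case True
  then show ?thesis
    unfolding pullback_def deg_def M_def inc_edges_def by simp
next
  case False
  have "fV ` verts G \<subseteq> verts G'"
    using ph unfolding pseudo_harmonic_def morphism_def by auto
  moreover have "finite (verts G)" and "finite (verts G')"
    using G G' unfolding loopless_model_def by simp_all
  ultimately have "(\<Sum>v\<in>verts G. pullback G G' fV fE D' v) =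
       (\<Sum>b\<in>verts G'. \<Sum>v\<in>{v \<in> verts G. fV v = b}. M G G' fV fE v * D' b)"
    unfolding pullback_def by (subst sum.group[symmetric]) (auto intro: sum.cong)
  also have "\<dots> = (\<Sum>b\<in>verts G'. deg G G' fE * D' b)"
    using sum_M_fibre_eq_deg[OF G G' ph False] by (simp add: sum_distrib_right[symmetric])
  finally show ?thesis
    by (simp add: sum_distrib_left)
qed

theorem theorem6p10:
  fixes G :: "('v, 'e) wgraph" and G' :: "('w, 'f) wgraph"
    and fV :: "'v \<Rightarrow> 'w" and fE :: "'e \<Rightarrow> 'w + 'f"
  assumes "loopless_model G" and "loopless_model G'"
    and "pseudo_harmonic G G' fV fE"
  shows "(\<forall>v\<in>verts G. canonical G v =
            pullback G G' fV fE (canonical G') v + ramification G G' fV fE v)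
       \<and> 2 * genus G - 2 =
            deg G G' fE * (2 * genus G' - 2)
            + (\<Sum>v\<in>verts G. 2 * (M G G' fV fE v - 1 + int (wt G v)
                                   - M G G' fV fE v * int (wt G' (fV v))))
            - (\<Sum>v\<in>verts G. \<Sum>e\<in>inc_edges G v. U G G' fE e - 1)"
proof -
  have local: "\<forall>v\<in>verts G. canonical G v =
                 pullback G G' fV fE (canonical G') v + ramification G G' fV fE v"
    using canonical_eq_pullback_plus_ramification[OF assms] by blast
  have "2 * genus G - 2 = (\<Sum>v\<in>verts G. canonical G v)"
    using sum_canonical_eq_genus[OF assms(1)] by simp
  also have "\<dots> = (\<Sum>v\<in>verts G. pullback G G' fV fE (canonical G') v)
                  + (\<Sum>v\<in>verts G. ramification G G' fV fE v)"
    using local by (simp add: sum.distrib)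
  also have "(\<Sum>v\<in>verts G. pullback G G' fV fE (canonical G') v) = deg G G' fE * (2 * genus G' - 2)"
    using sum_pullback_eq_deg_mult[OF assms] sum_canonical_eq_genus[OF assms(2)] by simp
  finally show ?thesis
    using local unfolding ramification_def by (simp add: sum_subtractf)
qed

end
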